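(* Let $a<b$, $\alpha,\beta\in(0,1)$, $y_b\in\mathbb R$, $F\in C^1([a,b]\times\mathbb R^2;\mathbb R)$, and $$\mathcal J(y)={}_aI_b^\alpha\big[t\mapsto F(t,y(t),{}^C_aD_t^\beta[y](t))\big](b).$$ Let $y\in C^1([a,b])$, with ${}^C_aD_t^\beta[y]$ continuous on $[a,b]$ and $y(b)=y_b$, be a minimizer of $\mathcal J$ among all such functions ($y(a)$ free). Write $[y](t)=(t,y(t),{}^C_aD_t^\beta[y](t))$ and $g(t)=(b-t)^{\alpha-1}\partial_3F([y](t))$, and assume: $t\mapsto(b-t)^{\alpha-1}\partial_2F([y](t))$ and ${}_tD_b^\beta[g]$ are continuous on $(a,b)$; ${}_tI_b^{1-\beta}[g]$ is absolutely continuous on $[a,b]$; and either the kernel $(t,\tau)\mapsto(t-\tau)^{-\beta}/\Gamma(1-\beta)$ is square integrable on $\{a\le\tau<t\le b\}$ and $g\in L_2([a,b])$, or $g$ is continuous on $[a,b]$. Then for all $t\in(a,b)$, $$(b-t)^{\alpha-1}\partial_2F([y](t))+{}_tD_b^\beta\big[\tau\mapsto(b-\tau)^{\alpha-1}\partial_3F([y](\tau))\big](t)=0,$$ and the natural boundary condition $${}_tI_b^{1-\beta}\big[\tau\mapsto(b-\tau)^{\alpha-1}\partial_3F([y](\tau))\big](a)=0$$ holds, i.e. $\int_a^b(\tau-a)^{-\beta}(b-\tau)^{\alpha-1}\partial_3F([y](\tau))\,d\tau=0$.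
   Context: $\partial_iF$ denotes the partial derivative of $F$ in its $i$-th argument. For $\mu\in(0,1)$: ${}_aI_t^\mu[f](t)=\frac1{\Gamma(\mu)}\int_a^t(t-\tau)^{\mu-1}f(\tau)d\tau$, ${}_tI_b^\mu[f](t)=\frac1{\Gamma(\mu)}\int_t^b(\tau-t)^{\mu-1}f(\tau)d\tau$, ${}_tD_b^\mu[f](t)=-\frac{d}{dt}{}_tI_b^{1-\mu}[f](t)$, ${}^C_aD_t^\mu[f](t)={}_aI_t^{1-\mu}[f'](t)$. ${}_aI_b^\alpha[h](b)$ means $\frac1{\Gamma(\alpha)}\int_a^b(b-t)^{\alpha-1}h(t)dt$. *)

theory Defs
  imports "HOL-Analysis.Analysis"
begin

definition lRLI :: "real \<Rightarrow> real \<Rightarrow> (real \<Rightarrow> real) \<Rightarrow> real \<Rightarrow> real" where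
  "lRLI a mu f t = (1 / Gamma mu) * integral {a..t} (\<lambda>\<tau>. (t - \<tau>) powr (mu - 1) * f \<tau>)"

definition rRLI :: "real \<Rightarrow> real \<Rightarrow> (real \<Rightarrow> real) \<Rightarrow> real \<Rightarrow> real" where
  "rRLI b mu f t = (1 / Gamma mu) * integral {t..b} (\<lambda>\<tau>. (\<tau> - t) powr (mu - 1) * f \<tau>)"

definition rRLD :: "real \<Rightarrow> real \<Rightarrow> (real \<Rightarrow> real) \<Rightarrow> real \<Rightarrow> real" where
  "rRLD b mu f t = - deriv (rRLI b (1 - mu) f) t"

definition caputo :: "real \<Rightarrow> real \<Rightarrow> real \<Rightarrow> (real \<Rightarrow> real) \<Rightarrow> real \<Rightarrow> real" where
  "caputo a b mu y t = lRLI a (1 - mu) (\<lambda>\<tau>. vector_derivative y (at \<tau> within {a..b})) t"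

definition C1_on :: "real \<Rightarrow> real \<Rightarrow> (real \<Rightarrow> real) \<Rightarrow> bool" where
  "C1_on a b y \<longleftrightarrow> (\<exists>y'. continuous_on {a..b} y' \<and>
      (\<forall>t\<in>{a..b}. (y has_real_derivative y' t) (at t within {a..b})))"

definition abs_continuous_on :: "real \<Rightarrow> real \<Rightarrow> (real \<Rightarrow> real) \<Rightarrow> bool" where
  "abs_continuous_on a b f \<longleftrightarrow>
    (\<forall>e>0. \<exists>d>0. \<forall>(n::nat) (s::nat \<Rightarrow> real) (t::nat \<Rightarrow> real).
       (\<forall>i<n. a \<le> s i \<and> s i \<le> t i \<and> t i \<le> b) \<and>
       (\<forall>i<n. \<forall>j<n. i \<noteq> j \<longrightarrow> t i \<le> s j \<or> t j \<le> s i) \<and>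
       (\<Sum>i<n. t i - s i) < d
       \<longrightarrow> (\<Sum>i<n. \<bar>f (t i) - f (s i)\<bar>) < e)"

definition Jfun :: "real \<Rightarrow> real \<Rightarrow> real \<Rightarrow> real \<Rightarrow> (real \<Rightarrow> real \<Rightarrow> real \<Rightarrow> real)
    \<Rightarrow> (real \<Rightarrow> real) \<Rightarrow> real" where
  "Jfun a b alpha beta F y = lRLI a alpha (\<lambda>t. F t (y t) (caputo a b beta y t)) b"

definition admissible :: "real \<Rightarrow> real \<Rightarrow> real \<Rightarrow> real \<Rightarrow> (real \<Rightarrow> real) \<Rightarrow> bool" where
  "admissible a b beta yb y \<longleftrightarrow>
     C1_on a b y \<and> continuous_on {a..b} (caputo a b beta y) \<and> y b = yb"

end

theory Submission
  imports Defs
begin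

text \<open>
  Perturb the minimiser to \<open>y + s e\<close> with \<open>e\<close> of class \<open>C\<^sup>1\<close> and \<open>e b = 0\<close>. The Caputo derivative
  is linear and sends \<open>C\<^sup>1\<close> functions to continuous ones (a fractional integral of a continuous
  function is Hoelder continuous), so \<open>y + s e\<close> is admissible, and dominated convergence allows
  differentiating \<open>J (y + s e)\<close> at \<open>s = 0\<close> under the integral sign. Minimality gives the first
  variation \<open>\<integral> w (\<partial>\<^sub>2F e + \<partial>\<^sub>3F D e) = 0\<close> with the weight \<open>w t = (b - t) powr (alpha - 1)\<close>
  and \<open>D\<close> the Caputo derivative. Fubini on the triangle \<open>a \<le> \<tau> \<le> t \<le> b\<close> turns the second term into
  \<open>\<integral> I e'\<close>, where \<open>I\<close> is the right fractional integral of \<open>g = w \<partial>\<^sub>3F\<close>, and an integration by parts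
  gives \<open>\<integral> E e = I a * e a\<close> for the left-hand side \<open>E\<close> of the Euler--Lagrange equation. Bump
  functions supported in \<open>(a, b)\<close> force \<open>E = 0\<close> there; the variation \<open>e t = b - t\<close> then gives
  the natural boundary condition \<open>I a = 0\<close>.
\<close>

lemma continuous_on_compact_abs_bound:
  fixes f :: "'a::topological_space \<Rightarrow> real"
  assumes "compact S" "continuous_on S f"
  obtains B where "B \<ge> 0" "\<And>x. x \<in> S \<Longrightarrow> \<bar>f x\<bar> \<le> B"
proof -
  have "bounded (f ` S)"
    by (intro compact_imp_bounded compact_continuous_image assms)
  then obtain B where "\<forall>x\<in>f ` S. norm x \<le> B" by (auto simp: bounded_iff)
  then show ?thesis using that[of "max B 0"] by force
qed

section \<open>Power kernels\<close>

lemma powr_kernel_has_integral: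
  fixes a t e :: real
  assumes "a \<le> t" "e > -1"
  shows "((\<lambda>\<tau>. (t - \<tau>) powr e) has_integral (t - a) powr (e + 1) / (e + 1)) {a..t}"
proof -
  have "((\<lambda>\<tau>. (t - \<tau>) powr e) has_integral
     ((\<lambda>\<tau>. - ((t - \<tau>) powr (e + 1) / (e + 1))) t - (\<lambda>\<tau>. - ((t - \<tau>) powr (e + 1) / (e + 1))) a)) {a..t}"
  proof (rule fundamental_theorem_of_calculus_interior)
    show "continuous_on {a..t} (\<lambda>\<tau>. - ((t - \<tau>) powr (e + 1) / (e + 1)))"
      using assms by (intro continuous_intros continuous_on_powr') auto
    fix x assume "x \<in> {a<..<t}"
    then show "((\<lambda>\<tau>. - ((t - \<tau>) powr (e + 1) / (e + 1))) has_vector_derivative (t - x) powr e) (at x)"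
      unfolding has_real_derivative_iff_has_vector_derivative[symmetric]
      using assms by (auto intro!: derivative_eq_intros)
  qed (use assms in auto)
  then show ?thesis by simp
qed

lemma powr_kernel_mult_absolutely_integrable:
  fixes a t e :: real and h :: "real \<Rightarrow> real"
  assumes "a \<le> t" "e > -1" "continuous_on {a..t} h"
  shows "(\<lambda>\<tau>. (t - \<tau>) powr e * h \<tau>) absolutely_integrable_on {a..t}"
proof -
  have "(\<lambda>\<tau>. (t - \<tau>) powr e) absolutely_integrable_on {a..t}"
    using powr_kernel_has_integral[OF assms(1,2)]
    by (subst absolutely_integrable_on_iff_nonneg) (auto simp: integrable_on_def)
  then have "(\<lambda>\<tau>. h \<tau> * (t - \<tau>) powr e) absolutely_integrable_on {a..t}"
  proof (intro absolutely_integrable_bounded_measurable_product_real)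
    show "h \<in> borel_measurable (lebesgue_on {a..t})"
      by (rule continuous_imp_measurable_on_sets_lebesgue) (use assms in auto)
    show "bounded (h ` {a..t})"
      by (intro compact_imp_bounded compact_continuous_image assms) auto
  qed auto
  then show ?thesis by (simp add: mult.commute)
qed

lemma powr_kernel_mult_integrable:
  fixes a t e :: real and h :: "real \<Rightarrow> real"
  assumes "a \<le> t" "e > -1" "continuous_on {a..t} h"
  shows "(\<lambda>\<tau>. (t - \<tau>) powr e * h \<tau>) integrable_on {a..t}"
  using powr_kernel_mult_absolutely_integrable[OF assms] set_lebesgue_integral_eq_integral(1) by blast

lemma powr_kernel_mult_set_integrable:
  fixes a b e :: real and h :: "real \<Rightarrow> real"
  assumes "a \<le> b" "e > -1" "continuous_on {a..b} h"
  shows "set_integrable lborel {a..b} (\<lambda>t. (b - t) powr e * h t)"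
proof -
  have "continuous_on {a..<b} (\<lambda>t. (b - t) powr e * h t)"
    by (intro continuous_intros continuous_on_subset[OF assms(3)]) auto
  then have "(\<lambda>t. indicator {a..<b} t *\<^sub>R ((b - t) powr e * h t)) \<in> borel_measurable borel"
    by (rule borel_measurable_continuous_on_indicator[rotated]) auto
  moreover have "(\<lambda>t. indicator {a..<b} t *\<^sub>R ((b - t) powr e * h t))
      = (\<lambda>t. indicator {a..b} t *\<^sub>R ((b - t) powr e * h t))"
    by (auto simp: indicator_def fun_eq_iff)
  ultimately show ?thesis
    using powr_kernel_mult_absolutely_integrable[OF assms] unfolding set_integrable_def
    by (subst (asm) integrable_completion) auto
qed

lemma abs_integral_mult_le:
  fixes g h :: "real \<Rightarrow> real"
  assumes "(\<lambda>x. g x * h x) integrable_on S" "(\<lambda>x. \<bar>g x\<bar>) integrable_on S"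
    and "\<And>x. x \<in> S \<Longrightarrow> \<bar>h x\<bar> \<le> M"
  shows "\<bar>integral S (\<lambda>x. g x * h x)\<bar> \<le> M * integral S (\<lambda>x. \<bar>g x\<bar>)"
proof -
  have "norm (integral S (\<lambda>x. g x * h x)) \<le> integral S (\<lambda>x. M * \<bar>g x\<bar>)"
  proof (rule integral_norm_bound_integral)
    show "(\<lambda>x. M * \<bar>g x\<bar>) integrable_on S"
      using integrable_on_cmult_left[OF assms(2), of M] by simp
    show "norm (g x * h x) \<le> M * \<bar>g x\<bar>" if "x \<in> S" for x
      using mult_right_mono[OF assms(3)[OF that], of "\<bar>g x\<bar>"] by (simp add: abs_mult mult.commute)
  qed (fact assms(1))
  then show ?thesis by simp
qed

lemma powr_kernel_shift_integral_le:
  fixes a t1 t2 beta :: real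
  assumes t: "a \<le> t1" "t1 \<le> t2" and beta: "0 < beta" "beta < 1"
  defines "k \<equiv> \<lambda>\<tau>. (t1 - \<tau>) powr (- beta) - (t2 - \<tau>) powr (- beta)"
  shows "(\<lambda>\<tau>. \<bar>k \<tau>\<bar>) integrable_on {a..t1}"
    and "integral {a..t1} (\<lambda>\<tau>. \<bar>k \<tau>\<bar>) \<le> (t2 - t1) powr (1 - beta) / (1 - beta)"
proof -
  have K1: "((\<lambda>\<tau>. (t1 - \<tau>) powr (- beta)) has_integral (t1 - a) powr (1 - beta) / (1 - beta)) {a..t1}"
    using powr_kernel_has_integral[of a t1 "- beta"] t beta by simp
  have K2: "((\<lambda>\<tau>. (t2 - \<tau>) powr (- beta)) has_integral (t2 - a) powr (1 - beta) / (1 - beta)) {a..t2}"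
    using powr_kernel_has_integral[of a t2 "- beta"] t beta by simp
  have K2': "((\<lambda>\<tau>. (t2 - \<tau>) powr (- beta)) has_integral (t2 - t1) powr (1 - beta) / (1 - beta)) {t1..t2}"
    using powr_kernel_has_integral[of t1 t2 "- beta"] t beta by simp
  have K2_int: "(\<lambda>\<tau>. (t2 - \<tau>) powr (- beta)) integrable_on {a..t1}"
    by (rule integrable_on_subinterval[OF has_integral_integrable[OF K2]]) (use t in auto)
  have K2_val: "integral {a..t1} (\<lambda>\<tau>. (t2 - \<tau>) powr (- beta))
      = ((t2 - a) powr (1 - beta) - (t2 - t1) powr (1 - beta)) / (1 - beta)"
    using Henstock_Kurzweil_Integration.integral_combine[OF t has_integral_integrable[OF K2]]
      integral_unique[OF K2] integral_unique[OF K2'] by (simp add: diff_divide_distrib)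
  have k_int: "k integrable_on {a..t1}"
    unfolding k_def by (rule integrable_diff[OF has_integral_integrable[OF K1] K2_int])
  \<comment> \<open>the kernel is decreasing, so \<open>k\<close> is nonnegative except at the endpoint \<open>t1\<close>, where \<open>0 powr (-beta) = 0\<close>\<close>
  have k_nonneg: "\<bar>k \<tau>\<bar> = k \<tau>" if "\<tau> \<in> {a..t1} - {t1}" for \<tau>
  proof -
    have "(t2 - \<tau>) powr (- beta) \<le> (t1 - \<tau>) powr (- beta)"
      using that t beta by (intro powr_mono2') auto
    then show ?thesis unfolding k_def by simp
  qed
  have k_abs: "integral {a..t1} (\<lambda>\<tau>. \<bar>k \<tau>\<bar>) = integral {a..t1} k"
    by (rule integral_spike[of "{t1}"]) (use k_nonneg in auto)
  show "(\<lambda>\<tau>. \<bar>k \<tau>\<bar>) integrable_on {a..t1}"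
    by (rule integrable_spike[OF k_int, of "{t1}"]) (use k_nonneg in auto)
  have "integral {a..t1} k = (t1 - a) powr (1 - beta) / (1 - beta)
      - ((t2 - a) powr (1 - beta) - (t2 - t1) powr (1 - beta)) / (1 - beta)"
    unfolding k_def integral_diff[OF has_integral_integrable[OF K1] K2_int] integral_unique[OF K1] K2_val ..
  moreover have "(t1 - a) powr (1 - beta) \<le> (t2 - a) powr (1 - beta)"
    using t beta by (intro powr_mono2) auto
  ultimately show "integral {a..t1} (\<lambda>\<tau>. \<bar>k \<tau>\<bar>) \<le> (t2 - t1) powr (1 - beta) / (1 - beta)"
    using beta unfolding k_abs by (simp add: divide_simps)
qed

lemma powr_kernel_integral_holder:
  fixes a t1 t2 beta M :: real and h :: "real \<Rightarrow> real"
  assumes t: "a \<le> t1" "t1 \<le> t2" and beta: "0 < beta" "beta < 1"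
    and h: "continuous_on {a..t2} h" and M: "\<And>\<tau>. \<tau> \<in> {a..t2} \<Longrightarrow> \<bar>h \<tau>\<bar> \<le> M"
  shows "\<bar>integral {a..t2} (\<lambda>\<tau>. (t2 - \<tau>) powr (- beta) * h \<tau>)
          - integral {a..t1} (\<lambda>\<tau>. (t1 - \<tau>) powr (- beta) * h \<tau>)\<bar>
         \<le> 2 * M * (t2 - t1) powr (1 - beta) / (1 - beta)"
proof -
  define k1 where "k1 \<tau> = (t1 - \<tau>) powr (- beta)" for \<tau>
  define k2 where "k2 \<tau> = (t2 - \<tau>) powr (- beta)" for \<tau>
  have e: "- beta > -1" using beta by simp
  have hk2: "(\<lambda>\<tau>. k2 \<tau> * h \<tau>) integrable_on {a..t2}"
    unfolding k2_def using powr_kernel_mult_integrable[OF _ e h] t by simp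
  have hk1: "(\<lambda>\<tau>. k1 \<tau> * h \<tau>) integrable_on {a..t1}"
    unfolding k1_def using powr_kernel_mult_integrable[OF _ e continuous_on_subset[OF h]] t by simp
  have hk2a: "(\<lambda>\<tau>. k2 \<tau> * h \<tau>) integrable_on {a..t1}"
    by (rule integrable_on_subinterval[OF hk2]) (use t in auto)
  have hk2b: "(\<lambda>\<tau>. k2 \<tau> * h \<tau>) integrable_on {t1..t2}"
    by (rule integrable_on_subinterval[OF hk2]) (use t in auto)
  have K2b: "(k2 has_integral (t2 - t1) powr (1 - beta) / (1 - beta)) {t1..t2}"
    unfolding k2_def using powr_kernel_has_integral[of t1 t2 "- beta"] t beta by simp
  have near: "\<bar>integral {a..t1} (\<lambda>\<tau>. (k1 \<tau> - k2 \<tau>) * h \<tau>)\<bar> \<le> M * ((t2 - t1) powr (1 - beta) / (1 - beta))"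
  proof -
    note shift = powr_kernel_shift_integral_le[OF t beta, folded k1_def k2_def]
    have "\<bar>integral {a..t1} (\<lambda>\<tau>. (k1 \<tau> - k2 \<tau>) * h \<tau>)\<bar> \<le> M * integral {a..t1} (\<lambda>\<tau>. \<bar>k1 \<tau> - k2 \<tau>\<bar>)"
      using integrable_diff[OF hk1 hk2a] M t
      by (intro abs_integral_mult_le shift(1)) (auto simp: algebra_simps)
    also have "\<dots> \<le> M * ((t2 - t1) powr (1 - beta) / (1 - beta))"
      using M[of a] t by (intro mult_left_mono shift(2)) auto
    finally show ?thesis .
  qed
  have far: "\<bar>integral {t1..t2} (\<lambda>\<tau>. k2 \<tau> * h \<tau>)\<bar> \<le> M * ((t2 - t1) powr (1 - beta) / (1 - beta))"
  proof -
    have k2_abs: "(\<lambda>\<tau>. \<bar>k2 \<tau>\<bar>) = k2"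
      by (simp add: k2_def fun_eq_iff)
    have "\<bar>integral {t1..t2} (\<lambda>\<tau>. k2 \<tau> * h \<tau>)\<bar> \<le> M * integral {t1..t2} (\<lambda>\<tau>. \<bar>k2 \<tau>\<bar>)"
      using hk2b has_integral_integrable[OF K2b] M t by (intro abs_integral_mult_le) (auto simp: k2_abs)
    then show ?thesis by (simp add: k2_abs integral_unique[OF K2b])
  qed
  have "integral {a..t2} (\<lambda>\<tau>. k2 \<tau> * h \<tau>) - integral {a..t1} (\<lambda>\<tau>. k1 \<tau> * h \<tau>)
      = integral {t1..t2} (\<lambda>\<tau>. k2 \<tau> * h \<tau>) - integral {a..t1} (\<lambda>\<tau>. (k1 \<tau> - k2 \<tau>) * h \<tau>)"
    using Henstock_Kurzweil_Integration.integral_combine[OF t hk2] integral_diff[OF hk1 hk2a]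
    by (simp add: algebra_simps)
  moreover have "2 * M * (t2 - t1) powr (1 - beta) / (1 - beta)
      = 2 * (M * ((t2 - t1) powr (1 - beta) / (1 - beta)))"
    by simp
  ultimately show ?thesis
    using near far unfolding k1_def k2_def by linarith
qed

lemma powr_kernel_integral_continuous_on:
  fixes a b beta :: real and h :: "real \<Rightarrow> real"
  assumes beta: "0 < beta" "beta < 1" and h: "continuous_on {a..b} h"
  shows "continuous_on {a..b} (\<lambda>t. integral {a..t} (\<lambda>\<tau>. (t - \<tau>) powr (- beta) * h \<tau>))"
  unfolding continuous_on_def
proof
  define I where "I t = integral {a..t} (\<lambda>\<tau>. (t - \<tau>) powr (- beta) * h \<tau>)" for t
  obtain M where M: "\<And>\<tau>. \<tau> \<in> {a..b} \<Longrightarrow> \<bar>h \<tau>\<bar> \<le> M"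
    using continuous_on_compact_abs_bound[OF _ h] by blast
  fix x assume x: "x \<in> {a..b}"
  define bound where "bound t = 2 * M * \<bar>t - x\<bar> powr (1 - beta) / (1 - beta)" for t
  have I_increment: "\<bar>I t - I x\<bar> \<le> bound t" if "t \<in> {a..b}" for t
  proof (cases "x \<le> t")
    case True
    have "\<bar>I t - I x\<bar> \<le> 2 * M * (t - x) powr (1 - beta) / (1 - beta)"
      unfolding I_def using x that True
      by (intro powr_kernel_integral_holder beta continuous_on_subset[OF h] M) auto
    then show ?thesis using True by (simp add: bound_def)
  next
    case False
    have "\<bar>I x - I t\<bar> \<le> 2 * M * (x - t) powr (1 - beta) / (1 - beta)"
      unfolding I_def using x that False
      by (intro powr_kernel_integral_holder beta continuous_on_subset[OF h] M) auto
    then show ?thesis using False by (simp add: bound_def abs_minus_commute)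
  qed
  have "(bound \<longlongrightarrow> 0) (at x within {a..b})"
  proof -
    have "continuous_on UNIV bound"
      unfolding bound_def using beta by (intro continuous_intros continuous_on_powr') auto
    then have "(bound \<longlongrightarrow> bound x) (at x within {a..b})"
      by (meson UNIV_I continuous_on_def tendsto_within_subset subset_UNIV)
    then show ?thesis
      using beta by (simp add: bound_def)
  qed
  moreover have "\<forall>\<^sub>F t in at x within {a..b}. norm (I t - I x) \<le> bound t"
    unfolding eventually_at_filter by (intro always_eventually) (simp add: I_increment)
  ultimately have "((\<lambda>t. I t - I x) \<longlongrightarrow> 0) (at x within {a..b})"
    by (rule Lim_null_comparison[rotated])
  then show "(I \<longlongrightarrow> I x) (at x within {a..b})"
    by (simp add: LIM_zero_iff)
qed

section \<open>Fubini for the fractional kernel\<close>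

definition triangle_kernel :: "real \<Rightarrow> real \<Rightarrow> real \<Rightarrow> real \<Rightarrow> real \<Rightarrow> real" where
  "triangle_kernel beta a b t \<tau> = (if a \<le> \<tau> \<and> \<tau> \<le> t \<and> t \<le> b then (t - \<tau>) powr (- beta) else 0)"

lemma triangle_kernel_measurable [measurable]:
  "(\<lambda>(t, \<tau>). triangle_kernel beta a b t \<tau>) \<in> borel_measurable (lborel \<Otimes>\<^sub>M lborel)"
  unfolding triangle_kernel_def by measurable

lemma triangle_kernel_eq_0: "t \<notin> {a..b} \<or> \<tau> \<notin> {a..b} \<Longrightarrow> triangle_kernel beta a b t \<tau> = 0"
  by (auto simp: triangle_kernel_def)

lemma triangle_kernel_fiber_fst:
  fixes h :: "real \<Rightarrow> real"
  assumes "t \<in> {a..b}" "beta < 1" "continuous_on {a..b} h"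
  shows "integrable lborel (\<lambda>\<tau>. h \<tau> * triangle_kernel beta a b t \<tau>)"
    and "(\<integral>\<tau>. h \<tau> * triangle_kernel beta a b t \<tau> \<partial>lborel)
           = integral {a..t} (\<lambda>\<tau>. (t - \<tau>) powr (- beta) * h \<tau>)"
proof -
  have si: "set_integrable lborel {a..t} (\<lambda>\<tau>. (t - \<tau>) powr (- beta) * h \<tau>)"
    using assms by (intro powr_kernel_mult_set_integrable continuous_on_subset[OF assms(3)]) auto
  have eq: "(\<lambda>\<tau>. h \<tau> * triangle_kernel beta a b t \<tau>)
      = (\<lambda>\<tau>. indicator {a..t} \<tau> *\<^sub>R ((t - \<tau>) powr (- beta) * h \<tau>))"
    using assms(1) by (auto simp: triangle_kernel_def indicator_def fun_eq_iff)
  show "integrable lborel (\<lambda>\<tau>. h \<tau> * triangle_kernel beta a b t \<tau>)"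
    using si unfolding eq set_integrable_def .
  show "(\<integral>\<tau>. h \<tau> * triangle_kernel beta a b t \<tau> \<partial>lborel)
      = integral {a..t} (\<lambda>\<tau>. (t - \<tau>) powr (- beta) * h \<tau>)"
    using set_borel_integral_eq_integral(2)[OF si] unfolding eq set_lebesgue_integral_def .
qed

lemma triangle_kernel_fiber_snd:
  fixes u :: "real \<Rightarrow> real"
  assumes "\<tau> \<in> {a..b}" and u: "integrable lborel (\<lambda>t. u t * triangle_kernel beta a b t \<tau>)"
  shows "(\<integral>t. u t * triangle_kernel beta a b t \<tau> \<partial>lborel)
           = integral {\<tau>..b} (\<lambda>t. (t - \<tau>) powr (- beta) * u t)"
proof -
  have eq: "(\<lambda>t. u t * triangle_kernel beta a b t \<tau>)
      = (\<lambda>t. indicator {\<tau>..b} t *\<^sub>R ((t - \<tau>) powr (- beta) * u t))"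
    using assms(1) by (auto simp: triangle_kernel_def indicator_def fun_eq_iff)
  have "set_integrable lborel {\<tau>..b} (\<lambda>t. (t - \<tau>) powr (- beta) * u t)"
    using u unfolding eq set_integrable_def .
  from set_borel_integral_eq_integral(2)[OF this] show ?thesis
    unfolding eq set_lebesgue_integral_def .
qed

lemma triangle_kernel_fiber_abs_integral_le:
  fixes h :: "real \<Rightarrow> real"
  assumes t: "t \<in> {a..b}" and beta: "0 < beta" "beta < 1" and h: "continuous_on {a..b} h"
    and M: "\<And>\<tau>. \<tau> \<in> {a..b} \<Longrightarrow> \<bar>h \<tau>\<bar> \<le> M"
  shows "(\<integral>\<tau>. \<bar>h \<tau> * triangle_kernel beta a b t \<tau>\<bar> \<partial>lborel) \<le> M * (b - a) powr (1 - beta) / (1 - beta)"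
proof -
  have abs_int: "set_integrable lborel {a..t} (\<lambda>\<tau>. \<bar>(t - \<tau>) powr (- beta) * h \<tau>\<bar>)"
    using t beta by (intro set_integrable_abs powr_kernel_mult_set_integrable continuous_on_subset[OF h]) auto
  have kernel_int: "((\<lambda>\<tau>. M * (t - \<tau>) powr (- beta)) has_integral M * ((t - a) powr (1 - beta) / (1 - beta))) {a..t}"
    using has_integral_mult_right[OF powr_kernel_has_integral[of a t "- beta"]] t beta by simp
  have "(\<integral>\<tau>. \<bar>h \<tau> * triangle_kernel beta a b t \<tau>\<bar> \<partial>lborel)
      = (LINT \<tau>:{a..t}|lborel. \<bar>(t - \<tau>) powr (- beta) * h \<tau>\<bar>)"
    unfolding set_lebesgue_integral_def using t
    by (intro Bochner_Integration.integral_cong) (auto simp: triangle_kernel_def indicator_def mult.commute)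
  also have "\<dots> = integral {a..t} (\<lambda>\<tau>. \<bar>(t - \<tau>) powr (- beta)\<bar> * \<bar>h \<tau>\<bar>)"
    using set_borel_integral_eq_integral(2)[OF abs_int] by (simp add: abs_mult)
  also have "\<dots> \<le> integral {a..t} (\<lambda>\<tau>. M * (t - \<tau>) powr (- beta))"
  proof (rule integral_le)
    show "(\<lambda>\<tau>. \<bar>(t - \<tau>) powr (- beta)\<bar> * \<bar>h \<tau>\<bar>) integrable_on {a..t}"
      using set_borel_integral_eq_integral(1)[OF abs_int] by (simp add: abs_mult)
    show "\<bar>(t - \<tau>) powr (- beta)\<bar> * \<bar>h \<tau>\<bar> \<le> M * (t - \<tau>) powr (- beta)" if "\<tau> \<in> {a..t}" for \<tau>
      using M[of \<tau>] that t by (simp add: mult.commute mult_right_mono)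
  qed (use kernel_int in blast)
  also have "\<dots> = M * ((t - a) powr (1 - beta) / (1 - beta))"
    using integral_unique[OF kernel_int] .
  also have "\<dots> \<le> M * (b - a) powr (1 - beta) / (1 - beta)"
    using t beta order_trans[OF abs_ge_zero M[of t]]
    by (auto intro!: mult_left_mono divide_right_mono powr_mono2)
  finally show ?thesis .
qed

lemma triangle_kernel_product_integrable:
  fixes a b beta :: real and u h :: "real \<Rightarrow> real"
  assumes beta: "0 < beta" "beta < 1"
    and u: "set_integrable lborel {a..b} u" and h: "continuous_on {a..b} h"
  shows "integrable (lborel \<Otimes>\<^sub>M lborel) (\<lambda>(t, \<tau>). u t * (h \<tau> * triangle_kernel beta a b t \<tau>))"
proof -
  define U where "U t = indicator {a..b} t * u t" for t
  define H where "H \<tau> = indicator {a..b} \<tau> * h \<tau>" for \<tau>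
  define f where "f t \<tau> = U t * (H \<tau> * triangle_kernel beta a b t \<tau>)" for t \<tau>
  have f_eq: "f t \<tau> = u t * (h \<tau> * triangle_kernel beta a b t \<tau>)" for t \<tau>
    by (simp add: f_def U_def H_def triangle_kernel_def)
  have [measurable]: "U \<in> borel_measurable borel"
    using borel_measurable_integrable[OF u[unfolded set_integrable_def]] unfolding U_def[abs_def] by simp
  have [measurable]: "H \<in> borel_measurable borel"
    using borel_measurable_continuous_on_indicator[OF _ h] unfolding H_def[abs_def] by simp
  have f_meas [measurable]: "case_prod f \<in> borel_measurable (lborel \<Otimes>\<^sub>M lborel)"
    unfolding f_def by measurable
  obtain M where M: "\<And>\<tau>. \<tau> \<in> {a..b} \<Longrightarrow> \<bar>h \<tau>\<bar> \<le> M"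
    using continuous_on_compact_abs_bound[OF _ h] by blast
  define C where "C = M * (b - a) powr (1 - beta) / (1 - beta)"
  have fiber_bound: "(\<integral>\<tau>. norm (f t \<tau>) \<partial>lborel) \<le> C * \<bar>U t\<bar>" for t
  proof (cases "t \<in> {a..b}")
    case True
    have "(\<integral>\<tau>. norm (f t \<tau>) \<partial>lborel) = \<bar>U t\<bar> * (\<integral>\<tau>. \<bar>h \<tau> * triangle_kernel beta a b t \<tau>\<bar> \<partial>lborel)"
      using True by (simp add: f_eq U_def abs_mult)
    also have "\<dots> \<le> \<bar>U t\<bar> * C"
      unfolding C_def by (intro mult_left_mono triangle_kernel_fiber_abs_integral_le True beta h M) auto
    finally show ?thesis
      by (simp add: mult.commute)
  qed (simp add: f_def U_def)
  have "integrable (lborel \<Otimes>\<^sub>M lborel) (case_prod f)"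
  proof (rule lborel_pair.Fubini_integrable[OF f_meas])
    show "AE t in lborel. integrable lborel (\<lambda>\<tau>. case_prod f (t, \<tau>))"
    proof (rule AE_I2)
      fix t
      have "integrable lborel (\<lambda>\<tau>. h \<tau> * triangle_kernel beta a b t \<tau>)"
        using triangle_kernel_fiber_fst(1)[OF _ beta(2) h, of t]
        by (cases "t \<in> {a..b}") (simp_all add: triangle_kernel_eq_0)
      then show "integrable lborel (\<lambda>\<tau>. case_prod f (t, \<tau>))"
        by (simp add: f_eq)
    qed
    show "integrable lborel (\<lambda>t. \<integral>\<tau>. norm (case_prod f (t, \<tau>)) \<partial>lborel)"
    proof (rule Bochner_Integration.integrable_bound)
      show "integrable lborel (\<lambda>t. C * \<bar>U t\<bar>)"
        using u by (simp add: set_integrable_def U_def)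
      have "(\<lambda>(t, \<tau>). norm (f t \<tau>)) \<in> borel_measurable (lborel \<Otimes>\<^sub>M lborel)"
        by measurable
      then show "(\<lambda>t. \<integral>\<tau>. norm (case_prod f (t, \<tau>)) \<partial>lborel) \<in> borel_measurable lborel"
        using lborel.borel_measurable_lebesgue_integral by simp
      show "AE t in lborel. norm (\<integral>\<tau>. norm (case_prod f (t, \<tau>)) \<partial>lborel) \<le> norm (C * \<bar>U t\<bar>)"
        using fiber_bound by (intro AE_I2) (simp add: integral_nonneg_AE order_trans[OF _ abs_ge_self])
    qed
  qed
  moreover have "f = (\<lambda>t \<tau>. u t * (h \<tau> * triangle_kernel beta a b t \<tau>))"
    by (simp add: fun_eq_iff f_eq)
  ultimately show ?thesis
    by simp
qed

lemma powr_kernel_integral_swap: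
  fixes a b beta :: real and u h :: "real \<Rightarrow> real"
  assumes beta: "0 < beta" "beta < 1"
    and u: "set_integrable lborel {a..b} u" and h: "continuous_on {a..b} h"
  shows "integral {a..b} (\<lambda>t. u t * integral {a..t} (\<lambda>\<tau>. (t - \<tau>) powr (- beta) * h \<tau>))
       = integral {a..b} (\<lambda>\<tau>. h \<tau> * integral {\<tau>..b} (\<lambda>t. (t - \<tau>) powr (- beta) * u t))"
proof -
  define f where "f t \<tau> = u t * (h \<tau> * triangle_kernel beta a b t \<tau>)" for t \<tau>
  define L where "L t = u t * integral {a..t} (\<lambda>\<tau>. (t - \<tau>) powr (- beta) * h \<tau>)" for t
  define R where "R \<tau> = h \<tau> * integral {\<tau>..b} (\<lambda>t. (t - \<tau>) powr (- beta) * u t)" for \<tau>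
  have f_int: "integrable (lborel \<Otimes>\<^sub>M lborel) (case_prod f)"
    unfolding f_def using triangle_kernel_product_integrable[OF beta u h] .
  have fiber_fst: "(\<integral>\<tau>. f t \<tau> \<partial>lborel) = indicator {a..b} t *\<^sub>R L t" for t
    using triangle_kernel_fiber_fst(2)[OF _ beta(2) h, of t]
    by (cases "t \<in> {a..b}") (simp_all add: f_def L_def triangle_kernel_eq_0)
  have L_int: "set_integrable lborel {a..b} L"
    using lborel_pair.integrable_fst[OF f_int] unfolding set_integrable_def fiber_fst .
  have fiber_snd: "AE \<tau> in lborel. (\<integral>t. f t \<tau> \<partial>lborel) = indicator {a..b} \<tau> *\<^sub>R R \<tau>"
    using lborel_pair.AE_integrable_snd[OF f_int]
  proof eventually_elim
    case (elim \<tau>)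
    have f_eq: "(\<lambda>t. f t \<tau>) = (\<lambda>t. h \<tau> * (u t * triangle_kernel beta a b t \<tau>))"
      by (simp add: f_def fun_eq_iff mult_ac)
    show ?case
    proof (cases "\<tau> \<in> {a..b} \<and> h \<tau> \<noteq> 0")
      case True
      then have "integrable lborel (\<lambda>t. u t * triangle_kernel beta a b t \<tau>)"
        using elim unfolding f_eq by simp
      then show ?thesis
        using True triangle_kernel_fiber_snd[of \<tau> a b u beta] unfolding f_eq by (simp add: R_def)
    qed (auto simp: f_def R_def triangle_kernel_eq_0)
  qed
  have snd_meas: "(\<lambda>\<tau>. \<integral>t. f t \<tau> \<partial>lborel) \<in> borel_measurable lborel"
    using lborel_pair.integrable_snd[OF f_int] by (rule borel_measurable_integrable)
  \<comment> \<open>\<open>R\<close> need not be Borel measurable, so the right-hand side is evaluated in the completion\<close>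
  have fiber_snd': "AE \<tau> in lebesgue. (\<integral>t. f t \<tau> \<partial>lborel) = indicator {a..b} \<tau> *\<^sub>R R \<tau>"
    by (rule AE_completion[OF fiber_snd])
  have R_meas: "(\<lambda>\<tau>. indicator {a..b} \<tau> *\<^sub>R R \<tau>) \<in> borel_measurable lebesgue"
    by (rule borel_measurable_AE[OF _ fiber_snd']) (use snd_meas in \<open>auto intro: measurable_completion\<close>)
  have R_int: "set_integrable lebesgue {a..b} R"
    unfolding set_integrable_def
    using integrable_cong_AE_imp[OF _ R_meas fiber_snd'] lborel_pair.integrable_snd[OF f_int] snd_meas
    by (simp add: integrable_completion)
  have "integral {a..b} L = (\<integral>t. \<integral>\<tau>. f t \<tau> \<partial>lborel \<partial>lborel)"
    using set_borel_integral_eq_integral(2)[OF L_int] unfolding fiber_fst set_lebesgue_integral_def ..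
  also have "\<dots> = (\<integral>\<tau>. \<integral>t. f t \<tau> \<partial>lborel \<partial>lborel)"
    using lborel_pair.Fubini_integral[OF f_int] by simp
  also have "\<dots> = (\<integral>\<tau>. \<integral>t. f t \<tau> \<partial>lborel \<partial>lebesgue)"
    using snd_meas by (simp add: integral_completion)
  also have "\<dots> = (\<integral>\<tau>. indicator {a..b} \<tau> *\<^sub>R R \<tau> \<partial>lebesgue)"
    using snd_meas by (intro integral_cong_AE[OF _ R_meas fiber_snd']) (auto intro: measurable_completion)
  also have "\<dots> = integral {a..b} R"
    using set_lebesgue_integral_eq_integral(2)[OF R_int] unfolding set_lebesgue_integral_def .
  finally show ?thesis
    unfolding L_def R_def .
qed

section \<open>The Caputo derivative of a \<open>C\<^sup>1\<close> function\<close>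

lemma caputo_eq_powr_kernel_integral:
  fixes a b t beta :: real and z z' :: "real \<Rightarrow> real"
  assumes ab: "a < b" and t: "t \<in> {a..b}"
    and z': "\<And>\<tau>. \<tau> \<in> {a..b} \<Longrightarrow> (z has_real_derivative z' \<tau>) (at \<tau> within {a..b})"
  shows "caputo a b beta z t = 1 / Gamma (1 - beta) * integral {a..t} (\<lambda>\<tau>. (t - \<tau>) powr (- beta) * z' \<tau>)"
proof -
  have "vector_derivative z (at \<tau> within {a..b}) = z' \<tau>" if "\<tau> \<in> {a..t}" for \<tau>
    using that t ab z'[of \<tau>] vector_derivative_within_cbox[of a b \<tau> z "z' \<tau>"]
    by (auto simp: has_real_derivative_iff_has_vector_derivative)
  then have "integral {a..t} (\<lambda>\<tau>. (t - \<tau>) powr (1 - beta - 1) * vector_derivative z (at \<tau> within {a..b}))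
      = integral {a..t} (\<lambda>\<tau>. (t - \<tau>) powr (- beta) * z' \<tau>)"
    by (intro Henstock_Kurzweil_Integration.integral_cong) simp
  then show ?thesis
    by (simp add: caputo_def lRLI_def)
qed

lemma caputo_continuous_on:
  fixes a b beta :: real and z z' :: "real \<Rightarrow> real"
  assumes ab: "a < b" and beta: "0 < beta" "beta < 1"
    and z': "\<And>\<tau>. \<tau> \<in> {a..b} \<Longrightarrow> (z has_real_derivative z' \<tau>) (at \<tau> within {a..b})"
    and z'_cont: "continuous_on {a..b} z'"
  shows "continuous_on {a..b} (caputo a b beta z)"
proof -
  have "continuous_on {a..b}
      (\<lambda>t. 1 / Gamma (1 - beta) * integral {a..t} (\<lambda>\<tau>. (t - \<tau>) powr (- beta) * z' \<tau>))"
    by (intro continuous_intros powr_kernel_integral_continuous_on beta z'_cont)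
  then show ?thesis
    by (rule continuous_on_eq) (use caputo_eq_powr_kernel_integral[OF ab _ z'] in simp)
qed

lemma caputo_add_scaled:
  fixes a b beta s t :: real and y y' e e' :: "real \<Rightarrow> real"
  assumes ab: "a < b" and beta: "0 < beta" "beta < 1" and t: "t \<in> {a..b}"
    and y': "\<And>\<tau>. \<tau> \<in> {a..b} \<Longrightarrow> (y has_real_derivative y' \<tau>) (at \<tau> within {a..b})"
    and y'_cont: "continuous_on {a..b} y'"
    and e': "\<And>\<tau>. \<tau> \<in> {a..b} \<Longrightarrow> (e has_real_derivative e' \<tau>) (at \<tau> within {a..b})"
    and e'_cont: "continuous_on {a..b} e'"
  shows "caputo a b beta (\<lambda>t. y t + s * e t) t = caputo a b beta y t + s * caputo a b beta e t"
proof -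
  have ye': "((\<lambda>t. y t + s * e t) has_real_derivative y' \<tau> + s * e' \<tau>) (at \<tau> within {a..b})"
    if "\<tau> \<in> {a..b}" for \<tau>
    using y'[OF that] e'[OF that] by (auto intro!: derivative_eq_intros)
  have "(\<lambda>\<tau>. (t - \<tau>) powr (- beta) * y' \<tau>) integrable_on {a..t}"
       "(\<lambda>\<tau>. (t - \<tau>) powr (- beta) * e' \<tau>) integrable_on {a..t}"
    using t beta by (auto intro!: powr_kernel_mult_integrable continuous_on_subset[OF y'_cont]
        continuous_on_subset[OF e'_cont])
  from integral_add[OF this(1) integrable_on_cmult_left[OF this(2), of s]]
  have "integral {a..t} (\<lambda>\<tau>. (t - \<tau>) powr (- beta) * (y' \<tau> + s * e' \<tau>))
      = integral {a..t} (\<lambda>\<tau>. (t - \<tau>) powr (- beta) * y' \<tau>)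
        + s * integral {a..t} (\<lambda>\<tau>. (t - \<tau>) powr (- beta) * e' \<tau>)"
    by (simp add: distrib_left mult.left_commute)
  moreover note caputo_eq_powr_kernel_integral[OF ab t ye', of beta]
    caputo_eq_powr_kernel_integral[OF ab t y', of beta]
    caputo_eq_powr_kernel_integral[OF ab t e', of beta]
  ultimately show ?thesis
    by (simp add: algebra_simps)
qed

lemma admissible_add_scaled:
  fixes a b beta yb s :: real and y e e' :: "real \<Rightarrow> real"
  assumes ab: "a < b" and beta: "0 < beta" "beta < 1" and y: "admissible a b beta yb y"
    and e': "\<And>\<tau>. \<tau> \<in> {a..b} \<Longrightarrow> (e has_real_derivative e' \<tau>) (at \<tau> within {a..b})"
    and e'_cont: "continuous_on {a..b} e'" and e_b: "e b = 0"
  shows "admissible a b beta yb (\<lambda>t. y t + s * e t)"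
proof -
  obtain y' where y'_cont: "continuous_on {a..b} y'"
    and y': "\<And>t. t \<in> {a..b} \<Longrightarrow> (y has_real_derivative y' t) (at t within {a..b})"
    using y unfolding admissible_def C1_on_def by blast
  have "C1_on a b (\<lambda>t. y t + s * e t)"
    unfolding C1_on_def
    by (rule exI[of _ "\<lambda>t. y' t + s * e' t"])
       (auto intro!: continuous_intros y'_cont e'_cont derivative_eq_intros y' e')
  moreover have "continuous_on {a..b} (\<lambda>t. caputo a b beta y t + s * caputo a b beta e t)"
    using y by (intro continuous_intros caputo_continuous_on[OF ab beta e' e'_cont])
      (auto simp: admissible_def)
  then have "continuous_on {a..b} (caputo a b beta (\<lambda>t. y t + s * e t))"
    by (rule continuous_on_eq) (use caputo_add_scaled[OF ab beta _ y' y'_cont e' e'_cont] in simp)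
  ultimately show ?thesis
    using y e_b by (simp add: admissible_def)
qed

section \<open>Differentiation under the integral sign\<close>

lemma integral_difference_quotient_LIMSEQ:
  fixes w :: "real \<Rightarrow> real" and G G' :: "real \<Rightarrow> real \<Rightarrow> real" and X :: "nat \<Rightarrow> real"
  assumes w_int: "w integrable_on {a..b}" and w_nonneg: "\<And>t. t \<in> {a..b} \<Longrightarrow> 0 \<le> w t"
    and G_int: "\<And>s. s \<in> {-1..1} \<Longrightarrow> (\<lambda>t. w t * G s t) integrable_on {a..b}"
    and G_deriv: "\<And>s t. t \<in> {a..b} \<Longrightarrow> s \<in> {-1..1} \<Longrightarrow>
        ((\<lambda>s. G s t) has_real_derivative G' s t) (at s)"
    and G'_bound: "\<And>s t. t \<in> {a..b} \<Longrightarrow> s \<in> {-1..1} \<Longrightarrow> \<bar>G' s t\<bar> \<le> L"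
    and X: "\<And>n. X n \<in> {-1..1} - {0}" "X \<longlonglongrightarrow> 0"
  shows "(\<lambda>n. integral {a..b} (\<lambda>t. w t * ((G (X n) t - G 0 t) / X n)))
           \<longlonglongrightarrow> integral {a..b} (\<lambda>t. w t * G' 0 t)"
proof (rule dominated_convergence(2))
  have quotient_bound: "\<bar>(G s t - G 0 t) / s\<bar> \<le> L" if t: "t \<in> {a..b}" and s: "s \<in> {-1..1} - {0}" for s t
  proof -
    have "norm (G s t - G 0 t) \<le> L * norm (s - 0)"
    proof (rule field_differentiable_bound[where S = "{-1..1}" and f' = "\<lambda>s. G' s t"])
      show "((\<lambda>s. G s t) has_field_derivative G' z t) (at z within {-1..1})" if "z \<in> {-1..1}" for z
        using G_deriv[OF t that] by (rule has_field_derivative_at_within)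
      show "norm (G' z t) \<le> L" if "z \<in> {-1..1}" for z
        using G'_bound[OF t that] by simp
    qed (use s in auto)
    then show ?thesis using s by (simp add: divide_simps abs_divide)
  qed
  show "(\<lambda>t. w t * ((G (X n) t - G 0 t) / X n)) integrable_on {a..b}" for n
  proof (rule integrable_eq)
    show "(\<lambda>t. (w t * G (X n) t - w t * G 0 t) / X n) integrable_on {a..b}"
      using X(1)[of n] by (simp add: integrable_diff G_int)
  qed (simp add: right_diff_distrib)
  show "(\<lambda>t. L * w t) integrable_on {a..b}"
    using integrable_on_cmult_left[OF w_int, of L] by simp
  show "norm (w t * ((G (X n) t - G 0 t) / X n)) \<le> L * w t" if "t \<in> {a..b}" for n t
  proof -
    have "w t * \<bar>(G (X n) t - G 0 t) / X n\<bar> \<le> w t * L"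
      by (intro mult_left_mono quotient_bound[OF that X(1)] w_nonneg[OF that])
    then show ?thesis
      using w_nonneg[OF that] by (simp add: abs_mult mult.commute)
  qed
  show "(\<lambda>n. w t * ((G (X n) t - G 0 t) / X n)) \<longlonglongrightarrow> w t * G' 0 t" if "t \<in> {a..b}" for t
  proof -
    have "((\<lambda>s. (G s t - G 0 t) / (s - 0)) \<longlongrightarrow> G' 0 t) (at 0)"
      using G_deriv[OF that, of 0] unfolding has_field_derivative_iff by simp
    then have "((\<lambda>s. (G s t - G 0 t) / s) \<circ> X) \<longlonglongrightarrow> G' 0 t"
      using X unfolding tendsto_at_iff_sequentially by auto
    then show ?thesis by (intro tendsto_mult_left) (simp add: comp_def)
  qed
qed

lemma integral_has_real_derivative_dominated:
  fixes w :: "real \<Rightarrow> real" and G G' :: "real \<Rightarrow> real \<Rightarrow> real"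
  assumes w_int: "w integrable_on {a..b}" and w_nonneg: "\<And>t. t \<in> {a..b} \<Longrightarrow> 0 \<le> w t"
    and G_int: "\<And>s. s \<in> {-1..1} \<Longrightarrow> (\<lambda>t. w t * G s t) integrable_on {a..b}"
    and G_deriv: "\<And>s t. t \<in> {a..b} \<Longrightarrow> s \<in> {-1..1} \<Longrightarrow>
        ((\<lambda>s. G s t) has_real_derivative G' s t) (at s)"
    and G'_bound: "\<And>s t. t \<in> {a..b} \<Longrightarrow> s \<in> {-1..1} \<Longrightarrow> \<bar>G' s t\<bar> \<le> L"
  shows "((\<lambda>s. integral {a..b} (\<lambda>t. w t * G s t)) has_real_derivative
           integral {a..b} (\<lambda>t. w t * G' 0 t)) (at 0)"
proof -
  define \<Phi> where "\<Phi> s = integral {a..b} (\<lambda>t. w t * G s t)" for s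
  define Q where "Q s = integral {a..b} (\<lambda>t. w t * ((G s t - G 0 t) / s))" for s
  have quotient_eq: "Q s = (\<Phi> s - \<Phi> 0) / (s - 0)" if "s \<in> {-1<..<1}" "s \<noteq> 0" for s
  proof -
    have "\<Phi> s - \<Phi> 0 = integral {a..b} (\<lambda>t. w t * G s t - w t * G 0 t)"
      unfolding \<Phi>_def using that by (intro integral_diff[symmetric] G_int) auto
    also have "\<dots> = integral {a..b} (\<lambda>t. s * (w t * ((G s t - G 0 t) / s)))"
      using that by (intro Henstock_Kurzweil_Integration.integral_cong) (simp add: field_simps)
    finally show ?thesis using that by (simp add: Q_def)
  qed
  have "(Q \<longlongrightarrow> integral {a..b} (\<lambda>t. w t * G' 0 t)) (at 0 within {-1<..<1})"
    unfolding tendsto_at_iff_sequentially comp_def Q_def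
  proof (intro allI impI)
    fix X :: "nat \<Rightarrow> real"
    assume X: "\<forall>n. X n \<in> {-1<..<1} - {0}" "X \<longlonglongrightarrow> 0"
    have "X n \<in> {-1..1} - {0}" for n
      using X(1)[rule_format, of n] by auto
    then show "(\<lambda>n. integral {a..b} (\<lambda>t. w t * ((G (X n) t - G 0 t) / X n)))
        \<longlonglongrightarrow> integral {a..b} (\<lambda>t. w t * G' 0 t)"
      using integral_difference_quotient_LIMSEQ[OF w_int w_nonneg G_int G_deriv G'_bound _ X(2)] by blast
  qed
  moreover have "at (0::real) within {-1<..<1} = at 0"
    by (rule at_within_open) auto
  ultimately have "(Q \<longlongrightarrow> integral {a..b} (\<lambda>t. w t * G' 0 t)) (at 0)"
    by simp
  then have "((\<lambda>s. (\<Phi> s - \<Phi> 0) / (s - 0)) \<longlongrightarrow> integral {a..b} (\<lambda>t. w t * G' 0 t)) (at 0)"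
    by (rule Lim_transform_within_open[where s = "{-1<..<1}"]) (auto simp: quotient_eq)
  then show ?thesis
    unfolding has_field_derivative_iff \<Phi>_def .
qed

section \<open>Integration by parts and the fundamental lemma\<close>

lemma integration_by_parts_vanishing_right:
  fixes a b :: real and I e e' :: "real \<Rightarrow> real"
  assumes ab: "a < b" and I_cont: "continuous_on {a..b} I"
    and I_diff: "\<And>t. t \<in> {a<..<b} \<Longrightarrow> I differentiable (at t)"
    and e': "\<And>t. t \<in> {a..b} \<Longrightarrow> (e has_real_derivative e' t) (at t within {a..b})"
    and e'_cont: "continuous_on {a..b} e'" and e_b: "e b = 0"
  shows "(\<lambda>t. deriv I t * e t) integrable_on {a..b}"
    and "integral {a..b} (\<lambda>t. I t * e' t) = - I a * e a - integral {a..b} (\<lambda>t. deriv I t * e t)"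
proof -
  have e_cont: "continuous_on {a..b} e"
    unfolding continuous_on_eq_continuous_within using DERIV_continuous[OF e'] by blast
  have ftc: "((\<lambda>t. deriv I t * e t + I t * e' t) has_integral (I b * e b - I a * e a)) {a..b}"
  proof (rule fundamental_theorem_of_calculus_interior)
    show "continuous_on {a..b} (\<lambda>t. I t * e t)" by (intro continuous_intros I_cont e_cont)
    fix x assume x: "x \<in> {a<..<b}"
    have "(I has_real_derivative deriv I x) (at x)"
      using I_diff[OF x] DERIV_deriv_iff_real_differentiable by blast
    moreover have "(e has_real_derivative e' x) (at x)"
      using e'[of x] x at_within_Icc_at[of a x b] by auto
    ultimately show "((\<lambda>t. I t * e t) has_vector_derivative deriv I x * e x + I x * e' x) (at x)"
      unfolding has_real_derivative_iff_has_vector_derivative[symmetric]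
      by (auto intro!: derivative_eq_intros)
  qed (use ab in auto)
  have Ie': "(\<lambda>t. I t * e' t) integrable_on {a..b}"
    by (intro integrable_continuous_interval continuous_intros I_cont e'_cont)
  have "(\<lambda>t. (deriv I t * e t + I t * e' t) - I t * e' t) integrable_on {a..b}"
    using integrable_diff[OF has_integral_integrable[OF ftc] Ie'] .
  then show dIe: "(\<lambda>t. deriv I t * e t) integrable_on {a..b}" by simp
  show "integral {a..b} (\<lambda>t. I t * e' t) = - I a * e a - integral {a..b} (\<lambda>t. deriv I t * e t)"
    using integral_unique[OF ftc] integral_add[OF dIe Ie'] e_b by simp
qed

lemma abs_continuous_on_imp_continuous_on:
  assumes "abs_continuous_on a b f"
  shows "continuous_on {a..b} f"
  unfolding continuous_on_iff
proof (intro ballI allI impI)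
  fix x \<epsilon> :: real assume x: "x \<in> {a..b}" and \<epsilon>: "\<epsilon> > 0"
  then obtain d where d: "d > 0" and small: "\<forall>(n::nat) s t.
      (\<forall>i<n. a \<le> s i \<and> s i \<le> t i \<and> t i \<le> b) \<and>
      (\<forall>i<n. \<forall>j<n. i \<noteq> j \<longrightarrow> t i \<le> s j \<or> t j \<le> s i) \<and>
      (\<Sum>i<n. t i - s i) < d \<longrightarrow> (\<Sum>i<n. \<bar>f (t i) - f (s i)\<bar>) < \<epsilon>"
    using assms unfolding abs_continuous_on_def by blast
  have "dist (f x') (f x) < \<epsilon>" if x': "x' \<in> {a..b}" "dist x' x < d" for x'
  proof -
    have "(\<Sum>i<(1::nat). \<bar>f ((\<lambda>_. max x x') i) - f ((\<lambda>_. min x x') i)\<bar>) < \<epsilon>"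
      by (rule small[rule_format]) (use x x' in \<open>auto simp: dist_real_def\<close>)
    then show ?thesis
      by (cases "x \<le> x'") (auto simp: dist_real_def max_def min_def abs_minus_commute)
  qed
  then show "\<exists>d>0. \<forall>x'\<in>{a..b}. dist x' x < d \<longrightarrow> dist (f x') (f x) < \<epsilon>"
    using d by blast
qed

definition bump :: "real \<Rightarrow> real \<Rightarrow> real \<Rightarrow> real" where
  "bump t0 r t = (max 0 (r\<^sup>2 - (t - t0)\<^sup>2))\<^sup>2"

lemma max_0_power2_has_real_derivative:
  "((\<lambda>x. (max 0 x)\<^sup>2) has_real_derivative 2 * max 0 x) (at x)"
proof (cases x "0::real" rule: linorder_cases)
  case less
  have "((\<lambda>_. 0) has_real_derivative 0) (at x)"
    by simp
  then have "((\<lambda>x. (max 0 x)\<^sup>2) has_real_derivative 0) (at x)"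
    by (rule has_field_derivative_transform_within_open[where S = "{..<0}"]) (use less in auto)
  then show ?thesis
    using less by simp
next
  case equal
  have "(max 0 y)\<^sup>2 / y = max 0 y" for y :: real
    by (cases "y = 0") (simp_all add: power2_eq_square max_def)
  then have "((\<lambda>y::real. (max 0 y)\<^sup>2 / y) \<longlongrightarrow> 0) (at 0)"
    by (auto intro!: tendsto_eq_intros)
  then show ?thesis
    using equal by (simp add: has_field_derivative_iff)
next
  case greater
  have "((\<lambda>y. y\<^sup>2) has_real_derivative 2 * x) (at x)"
    by (auto intro!: derivative_eq_intros)
  then have "((\<lambda>x. (max 0 x)\<^sup>2) has_real_derivative 2 * x) (at x)"
    by (rule has_field_derivative_transform_within_open[where S = "{0<..}"]) (use greater in auto)
  then show ?thesis
    using greater by simp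
qed

lemma bump_has_real_derivative:
  "(bump t0 r has_real_derivative 2 * max 0 (r\<^sup>2 - (t - t0)\<^sup>2) * (- 2 * (t - t0))) (at t)"
  unfolding bump_def[abs_def]
  by (rule DERIV_chain2[OF max_0_power2_has_real_derivative]) (auto intro!: derivative_eq_intros)

lemma bump_continuous_on: "continuous_on S (bump t0 r)"
  unfolding bump_def[abs_def] by (intro continuous_intros)

lemma bump_nonneg: "bump t0 r t \<ge> 0"
  by (simp add: bump_def)

lemma bump_eq_0:
  assumes "0 \<le> r" "r \<le> \<bar>t - t0\<bar>"
  shows "bump t0 r t = 0"
proof -
  have "r\<^sup>2 \<le> (t - t0)\<^sup>2"
    using assms by (metis abs_le_square_iff abs_of_nonneg)
  then show ?thesis by (simp add: bump_def)
qed

lemma bump_has_integral: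
  assumes "r > 0"
  shows "(bump t0 r has_integral 16 * r ^ 5 / 15) {t0 - r..t0 + r}"
proof -
  define P where "P t = r ^ 4 * (t - t0) - 2 * r\<^sup>2 * (t - t0) ^ 3 / 3 + (t - t0) ^ 5 / 5" for t
  have "((\<lambda>t. (r\<^sup>2 - (t - t0)\<^sup>2)\<^sup>2) has_integral (P (t0 + r) - P (t0 - r))) {t0 - r..t0 + r}"
  proof (rule fundamental_theorem_of_calculus)
    fix x assume "x \<in> {t0 - r..t0 + r}"
    show "(P has_vector_derivative (r\<^sup>2 - (x - t0)\<^sup>2)\<^sup>2) (at x within {t0 - r..t0 + r})"
      unfolding P_def[abs_def] has_real_derivative_iff_has_vector_derivative[symmetric]
      by (auto intro!: derivative_eq_intros)
         (simp add: power2_eq_square power3_eq_cube eval_nat_numeral; algebra)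
  qed (use assms in auto)
  moreover have "P (t0 + r) - P (t0 - r) = 16 * r ^ 5 / 15"
    by (simp add: P_def eval_nat_numeral field_simps)
  moreover have "bump t0 r t = (r\<^sup>2 - (t - t0)\<^sup>2)\<^sup>2" if "t \<in> {t0 - r..t0 + r}" for t
  proof -
    have "\<bar>t - t0\<bar> \<le> \<bar>r\<bar>"
      using that assms by auto
    then have "(t - t0)\<^sup>2 \<le> r\<^sup>2"
      by (simp add: abs_le_square_iff)
    then show ?thesis by (simp add: bump_def)
  qed
  ultimately show ?thesis
    by (auto intro: has_integral_eq)
qed

lemma integral_mult_bump_pos:
  fixes f :: "real \<Rightarrow> real"
  assumes r: "r > 0" and f: "continuous_on {t0 - r..t0 + r} f"
    and m: "m > 0" "\<And>t. t \<in> {t0 - r..t0 + r} \<Longrightarrow> m \<le> f t"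
  shows "integral {t0 - r..t0 + r} (\<lambda>t. f t * bump t0 r t) > 0"
proof -
  have "0 < m * (16 * r ^ 5 / 15)"
    using m r by simp
  also have "\<dots> = integral {t0 - r..t0 + r} (\<lambda>t. m * bump t0 r t)"
    using integral_unique[OF bump_has_integral[OF r]] by simp
  also have "\<dots> \<le> integral {t0 - r..t0 + r} (\<lambda>t. f t * bump t0 r t)"
  proof (rule integral_le)
    show "(\<lambda>t. m * bump t0 r t) integrable_on {t0 - r..t0 + r}"
      using has_integral_mult_right[OF bump_has_integral[OF r], of m] by (auto simp: integrable_on_def)
    show "(\<lambda>t. f t * bump t0 r t) integrable_on {t0 - r..t0 + r}"
      by (intro integrable_continuous_interval continuous_intros f bump_continuous_on)
    show "m * bump t0 r t \<le> f t * bump t0 r t" if "t \<in> {t0 - r..t0 + r}" for t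
      using mult_right_mono[OF m(2)[OF that] bump_nonneg] .
  qed
  finally show ?thesis .
qed

lemma fundamental_lemma_calculus_of_variations:
  fixes a b :: real and E :: "real \<Rightarrow> real"
  assumes E_cont: "continuous_on {a<..<b} E"
    and E_orth: "\<And>e e'. (\<And>t. (e has_real_derivative e' t) (at t)) \<Longrightarrow> continuous_on UNIV e' \<Longrightarrow>
        e a = 0 \<Longrightarrow> e b = 0 \<Longrightarrow> integral {a..b} (\<lambda>t. E t * e t) = 0"
    and t0: "t0 \<in> {a<..<b}"
  shows "E t0 = 0"
proof (rule ccontr)
  assume "E t0 \<noteq> 0"
  define \<sigma> where "\<sigma> = sgn (E t0)"
  define m where "m = \<bar>E t0\<bar> / 2"
  have \<sigma>: "\<bar>\<sigma>\<bar> = 1" "\<sigma> * E t0 = \<bar>E t0\<bar>"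
    using \<open>E t0 \<noteq> 0\<close> by (simp_all add: \<sigma>_def abs_sgn sgn_abs mult.commute)
  have m: "m > 0"
    using \<open>E t0 \<noteq> 0\<close> by (simp add: m_def)
  obtain \<delta> where \<delta>: "\<delta> > 0" and near: "\<And>x. x \<in> {a<..<b} \<Longrightarrow> dist x t0 < \<delta> \<Longrightarrow> dist (E x) (E t0) < m"
    using E_cont t0 m unfolding continuous_on_iff by meson
  define r where "r = min (\<delta> / 2) (min ((t0 - a) / 2) ((b - t0) / 2))"
  have "r \<le> \<delta> / 2" "r \<le> (t0 - a) / 2" "r \<le> (b - t0) / 2"
    unfolding r_def by linarith+
  moreover have "r > 0"
    using \<delta> t0 by (simp add: r_def)
  ultimately have r: "r > 0" "r < \<delta>" and inside: "a < t0 - r" "t0 + r < b"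
    using t0 by auto
  then have S: "{t0 - r..t0 + r} \<subseteq> {a<..<b}"
    by auto
  have above: "m \<le> \<sigma> * E x" if "x \<in> {t0 - r..t0 + r}" for x
  proof -
    have "\<bar>E x - E t0\<bar> < m"
      using near[of x] that S r by (auto simp: dist_real_def)
    moreover have "\<bar>\<sigma> * (E x - E t0)\<bar> \<le> \<bar>E x - E t0\<bar>"
      using \<sigma>(1) by (simp add: abs_mult)
    moreover have "\<bar>E t0\<bar> - \<sigma> * E x \<le> \<bar>\<sigma> * (E x - E t0)\<bar>"
      using \<sigma>(2) by (simp add: right_diff_distrib)
    ultimately show ?thesis
      unfolding m_def by linarith
  qed
  have E_cont': "continuous_on {t0 - r..t0 + r} E"
    using continuous_on_subset[OF E_cont S] .
  have "(\<lambda>t. E t * bump t0 r t) integrable_on {t0 - r..t0 + r}"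
    by (intro integrable_continuous_interval continuous_intros E_cont' bump_continuous_on)
  then have "((\<lambda>t. E t * bump t0 r t) has_integral integral {t0 - r..t0 + r} (\<lambda>t. E t * bump t0 r t)) {a..b}"
    by (rule has_integral_on_superset[OF integrable_integral]) (use r inside in \<open>auto intro!: bump_eq_0\<close>)
  then have "integral {t0 - r..t0 + r} (\<lambda>t. E t * bump t0 r t) = integral {a..b} (\<lambda>t. E t * bump t0 r t)"
    by (rule integral_unique[symmetric])
  also have "\<dots> = 0"
    using inside r by (intro E_orth[OF bump_has_real_derivative]) (auto intro!: continuous_intros bump_eq_0)
  finally have "integral {t0 - r..t0 + r} (\<lambda>t. \<sigma> * E t * bump t0 r t) = 0"
    by (simp add: mult.assoc)
  moreover have "integral {t0 - r..t0 + r} (\<lambda>t. \<sigma> * E t * bump t0 r t) > 0"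
    using r m above by (intro integral_mult_bump_pos[where m = m] continuous_intros E_cont') auto
  ultimately show False
    by simp
qed

section \<open>The variational problem\<close>

lemma continuous_on_compose_curve:
  fixes G :: "real \<Rightarrow> real \<Rightarrow> real \<Rightarrow> real" and \<tau> p q :: "'a::topological_space \<Rightarrow> real"
  assumes G: "continuous_on ({a..b} \<times> UNIV) (\<lambda>(t, u, v). G t u v)"
    and "continuous_on S \<tau>" "continuous_on S p" "continuous_on S q" and "\<tau> ` S \<subseteq> {a..b}"
  shows "continuous_on S (\<lambda>x. G (\<tau> x) (p x) (q x))"
proof -
  have "continuous_on S (\<lambda>x. (\<tau> x, p x, q x))"
    using assms(2-4) by (intro continuous_on_Pair)
  then have "continuous_on S (\<lambda>x. (\<lambda>(t, u, v). G t u v) (\<tau> x, p x, q x))"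
    by (rule continuous_on_compose2[OF G]) (use assms(5) in auto)
  then show ?thesis by simp
qed

lemma continuous_on_along_variation:
  fixes G :: "real \<Rightarrow> real \<Rightarrow> real \<Rightarrow> real" and y c e d :: "real \<Rightarrow> real"
  assumes G: "continuous_on ({a..b} \<times> UNIV) (\<lambda>(t, u, v). G t u v)"
    and "continuous_on {a..b} y" "continuous_on {a..b} c" "continuous_on {a..b} e" "continuous_on {a..b} d"
  shows "continuous_on ({a..b} \<times> K)
    (\<lambda>p. G (fst p) (y (fst p) + snd p * e (fst p)) (c (fst p) + snd p * d (fst p)))"
proof -
  have along_fst: "continuous_on ({a..b} \<times> K) (\<lambda>p. f (fst p))" if "continuous_on {a..b} f" for f :: "real \<Rightarrow> real"
    by (rule continuous_on_compose2[OF that continuous_on_fst[OF continuous_on_id]]) auto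
  show ?thesis
    using assms(2-)
    by (intro continuous_on_compose_curve[OF G, where \<tau> = fst] continuous_intros along_fst) auto
qed

lemma has_real_derivative_along_line:
  fixes F F1 F2 F3 :: "real \<Rightarrow> real \<Rightarrow> real \<Rightarrow> real"
  assumes F_deriv: "\<And>t u v. t \<in> {a..b} \<Longrightarrow>
        ((\<lambda>(t, u, v). F t u v) has_derivative
           (\<lambda>(dt, du, dv). F1 t u v * dt + F2 t u v * du + F3 t u v * dv))
        (at (t, u, v) within {a..b} \<times> UNIV)"
    and t: "t \<in> {a..b}"
  shows "((\<lambda>s. F t (u + s * e) (v + s * d)) has_real_derivative
          F2 t (u + s * e) (v + s * d) * e + F3 t (u + s * e) (v + s * d) * d) (at s)"
proof -
  define P where "P s = (t, u + s * e, v + s * d)" for s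
  have P: "(P has_derivative (\<lambda>h. (0, h * e, h * d))) (at s within UNIV)"
    unfolding P_def by (auto intro!: derivative_eq_intros)
  have "((\<lambda>s. (\<lambda>(t, u, v). F t u v) (P s)) has_derivative
      (\<lambda>h. (\<lambda>(t, u, v). (\<lambda>(dt, du, dv). F1 t u v * dt + F2 t u v * du + F3 t u v * dv))
        (P s) (0, h * e, h * d))) (at s within UNIV)"
    by (rule has_derivative_in_compose2[where t = "{a..b} \<times> UNIV", OF _ _ _ P])
       (use t in \<open>auto simp: P_def intro: F_deriv\<close>)
  then have "((\<lambda>s. F t (u + s * e) (v + s * d)) has_derivative
      (\<lambda>h. F2 t (u + s * e) (v + s * d) * (h * e) + F3 t (u + s * e) (v + s * d) * (h * d))) (at s)"
    by (simp add: P_def)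
  then show ?thesis
    unfolding has_field_derivative_def
    by (rule has_derivative_eq_rhs) (auto simp: P_def fun_eq_iff algebra_simps)
qed

locale fractional_variational_problem =
  fixes a b alpha beta yb :: real
    and F F1 F2 F3 :: "real \<Rightarrow> real \<Rightarrow> real \<Rightarrow> real"
    and y :: "real \<Rightarrow> real"
  assumes ab: "a < b" and alpha: "0 < alpha" and beta: "0 < beta" "beta < 1"
    and F_deriv: "\<And>t u v. t \<in> {a..b} \<Longrightarrow>
        ((\<lambda>(t, u, v). F t u v) has_derivative
           (\<lambda>(dt, du, dv). F1 t u v * dt + F2 t u v * du + F3 t u v * dv))
        (at (t, u, v) within {a..b} \<times> UNIV)"
    and F2_cont: "continuous_on ({a..b} \<times> UNIV) (\<lambda>(t, u, v). F2 t u v)"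
    and F3_cont: "continuous_on ({a..b} \<times> UNIV) (\<lambda>(t, u, v). F3 t u v)"
    and y_adm: "admissible a b beta yb y"
    and y_min: "\<And>z. admissible a b beta yb z \<Longrightarrow> Jfun a b alpha beta F y \<le> Jfun a b alpha beta F z"
begin

lemma F_cont: "continuous_on ({a..b} \<times> UNIV) (\<lambda>(t, u, v). F t u v)"
  unfolding continuous_on_eq_continuous_within
proof
  fix p :: "real \<times> real \<times> real"
  assume "p \<in> {a..b} \<times> UNIV"
  then obtain t u v where "p = (t, u, v)" "t \<in> {a..b}"
    by (cases p) auto
  then show "continuous (at p within {a..b} \<times> UNIV) (\<lambda>(t, u, v). F t u v)"
    using has_derivative_continuous[OF F_deriv] by blast
qed

lemma y_C1:
  obtains y' where "continuous_on {a..b} y'"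
    and "\<And>t. t \<in> {a..b} \<Longrightarrow> (y has_real_derivative y' t) (at t within {a..b})"
  using y_adm unfolding admissible_def C1_on_def by blast

lemma y_cont: "continuous_on {a..b} y"
proof -
  obtain y' where "\<And>t. t \<in> {a..b} \<Longrightarrow> (y has_real_derivative y' t) (at t within {a..b})"
    using y_C1 by blast
  then show ?thesis
    unfolding continuous_on_eq_continuous_within using DERIV_continuous by blast
qed

lemma caputo_y_cont: "continuous_on {a..b} (caputo a b beta y)"
  using y_adm by (simp add: admissible_def)

lemma integral_minimal_along_variation:
  fixes e e' :: "real \<Rightarrow> real" and s :: real
  assumes e': "\<And>t. t \<in> {a..b} \<Longrightarrow> (e has_real_derivative e' t) (at t within {a..b})"
    and e'_cont: "continuous_on {a..b} e'" and e_b: "e b = 0"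
  shows "integral {a..b} (\<lambda>t. (b - t) powr (alpha - 1) * F t (y t) (caputo a b beta y t))
    \<le> integral {a..b} (\<lambda>t. (b - t) powr (alpha - 1) *
          F t (y t + s * e t) (caputo a b beta y t + s * caputo a b beta e t))"
proof -
  obtain y' where y'_cont: "continuous_on {a..b} y'"
    and y': "\<And>t. t \<in> {a..b} \<Longrightarrow> (y has_real_derivative y' t) (at t within {a..b})"
    using y_C1 by blast
  have "caputo a b beta (\<lambda>t. y t + s * e t) t = caputo a b beta y t + s * caputo a b beta e t"
    if "t \<in> {a..b}" for t
    by (rule caputo_add_scaled[OF ab beta that y' y'_cont e' e'_cont])
  then have "integral {a..b} (\<lambda>t. (b - t) powr (alpha - 1) *
      F t (y t + s * e t) (caputo a b beta (\<lambda>t. y t + s * e t) t))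
    = integral {a..b} (\<lambda>t. (b - t) powr (alpha - 1) *
      F t (y t + s * e t) (caputo a b beta y t + s * caputo a b beta e t))"
    by (intro Henstock_Kurzweil_Integration.integral_cong) simp
  then have "Jfun a b alpha beta F (\<lambda>t. y t + s * e t) = 1 / Gamma alpha * integral {a..b}
      (\<lambda>t. (b - t) powr (alpha - 1) * F t (y t + s * e t) (caputo a b beta y t + s * caputo a b beta e t))"
    by (simp add: Jfun_def lRLI_def)
  moreover have "Jfun a b alpha beta F y \<le> Jfun a b alpha beta F (\<lambda>t. y t + s * e t)"
    by (intro y_min admissible_add_scaled[OF ab beta y_adm e' e'_cont e_b])
  ultimately show ?thesis
    using Gamma_real_pos[OF alpha] by (simp add: Jfun_def lRLI_def divide_le_cancel)
qed

lemma first_variation_vanishes: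
  fixes e e' :: "real \<Rightarrow> real"
  assumes e': "\<And>t. t \<in> {a..b} \<Longrightarrow> (e has_real_derivative e' t) (at t within {a..b})"
    and e'_cont: "continuous_on {a..b} e'" and e_b: "e b = 0"
  shows "integral {a..b} (\<lambda>t. (b - t) powr (alpha - 1) *
           (F2 t (y t) (caputo a b beta y t) * e t + F3 t (y t) (caputo a b beta y t) * caputo a b beta e t)) = 0"
proof -
  define c where "c = caputo a b beta y"
  define d where "d = caputo a b beta e"
  define w where "w t = (b - t) powr (alpha - 1)" for t
  define G where "G s t = F t (y t + s * e t) (c t + s * d t)" for s t
  define G' where "G' s t = F2 t (y t + s * e t) (c t + s * d t) * e t
      + F3 t (y t + s * e t) (c t + s * d t) * d t" for s t
  have e_cont: "continuous_on {a..b} e"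
    unfolding continuous_on_eq_continuous_within using DERIV_continuous[OF e'] by blast
  have curves_cont: "continuous_on {a..b} y" "continuous_on {a..b} c" "continuous_on {a..b} e"
    "continuous_on {a..b} d"
    using y_cont caputo_y_cont e_cont caputo_continuous_on[OF ab beta e' e'_cont] by (simp_all add: c_def d_def)
  obtain L where L: "\<And>p. p \<in> {a..b} \<times> {-1..1} \<Longrightarrow> \<bar>G' (snd p) (fst p)\<bar> \<le> L"
  proof -
    have "continuous_on ({a..b} \<times> {-1..1}) (\<lambda>p. e (fst p))" "continuous_on ({a..b} \<times> {-1..1}) (\<lambda>p. d (fst p))"
      using curves_cont by (auto intro!: continuous_on_compose2[OF _ continuous_on_fst[OF continuous_on_id]])
    then have "continuous_on ({a..b} \<times> {-1..1}) (\<lambda>p. G' (snd p) (fst p))"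
      unfolding G'_def
      by (intro continuous_intros continuous_on_along_variation[OF F2_cont] continuous_on_along_variation[OF F3_cont]
          curves_cont)
    then show ?thesis
      using continuous_on_compact_abs_bound[OF compact_Times] that by blast
  qed
  have "((\<lambda>s. integral {a..b} (\<lambda>t. w t * G s t)) has_real_derivative
      integral {a..b} (\<lambda>t. w t * G' 0 t)) (at 0)"
  proof (rule integral_has_real_derivative_dominated)
    show "w integrable_on {a..b}"
      unfolding w_def using powr_kernel_mult_integrable[of a b "alpha - 1" "\<lambda>_. 1"] ab alpha by simp
    show "(\<lambda>t. w t * G s t) integrable_on {a..b}" for s
    proof -
      have "continuous_on {a..b} (G s)"
        unfolding G_def using curves_cont
        by (intro continuous_on_compose_curve[OF F_cont, where \<tau> = "\<lambda>t. t"] continuous_intros) auto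
      then show ?thesis
        unfolding w_def using ab alpha by (intro powr_kernel_mult_integrable) auto
    qed
    show "((\<lambda>s. G s t) has_real_derivative G' s t) (at s)" if "t \<in> {a..b}" for s t
      unfolding G_def G'_def by (rule has_real_derivative_along_line[OF F_deriv that])
    show "\<bar>G' s t\<bar> \<le> L" if "t \<in> {a..b}" "s \<in> {-1..1}" for s t
      using L[of "(t, s)"] that by simp
  qed (simp add: w_def)
  moreover have "integral {a..b} (\<lambda>t. w t * G 0 t) \<le> integral {a..b} (\<lambda>t. w t * G s t)" for s
    using integral_minimal_along_variation[OF e' e'_cont e_b, of s] by (simp add: w_def G_def c_def d_def)
  ultimately have "integral {a..b} (\<lambda>t. w t * G' 0 t) = 0"
    by (intro DERIV_local_min[where d = 1]) auto
  then show ?thesis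
    by (simp add: w_def G'_def c_def d_def)
qed

abbreviation weighted_F3 :: "real \<Rightarrow> real" where
  "weighted_F3 \<equiv> \<lambda>\<tau>. (b - \<tau>) powr (alpha - 1) * F3 \<tau> (y \<tau>) (caputo a b beta y \<tau>)"

abbreviation euler_lagrange_lhs :: "real \<Rightarrow> real" where
  "euler_lagrange_lhs \<equiv> \<lambda>t. (b - t) powr (alpha - 1) * F2 t (y t) (caputo a b beta y t)
     + rRLD b beta weighted_F3 t"

lemma along_y_continuous_on:
  fixes G :: "real \<Rightarrow> real \<Rightarrow> real \<Rightarrow> real"
  assumes "continuous_on ({a..b} \<times> UNIV) (\<lambda>(t, u, v). G t u v)"
  shows "continuous_on {a..b} (\<lambda>t. G t (y t) (caputo a b beta y t))"
  using y_cont caputo_y_cont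
  by (intro continuous_on_compose_curve[OF assms, where \<tau> = "\<lambda>t. t"] continuous_intros) auto

lemma weighted_F3_set_integrable: "set_integrable lborel {a..b} weighted_F3"
  using ab alpha by (intro powr_kernel_mult_set_integrable along_y_continuous_on F3_cont) auto

lemma integral_euler_lagrange_lhs_mult_variation:
  fixes e e' :: "real \<Rightarrow> real"
  assumes I_cont: "continuous_on {a..b} (rRLI b (1 - beta) weighted_F3)"
    and I_diff: "\<And>t. t \<in> {a<..<b} \<Longrightarrow> rRLI b (1 - beta) weighted_F3 differentiable (at t)"
    and e': "\<And>t. t \<in> {a..b} \<Longrightarrow> (e has_real_derivative e' t) (at t within {a..b})"
    and e'_cont: "continuous_on {a..b} e'" and e_b: "e b = 0"
  shows "integral {a..b} (\<lambda>t. euler_lagrange_lhs t * e t) = rRLI b (1 - beta) weighted_F3 a * e a"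
proof -
  define I where "I = rRLI b (1 - beta) weighted_F3"
  define w where "w t = (b - t) powr (alpha - 1)" for t
  define c where "c = caputo a b beta y"
  have e_cont: "continuous_on {a..b} e"
    unfolding continuous_on_eq_continuous_within using DERIV_continuous[OF e'] by blast
  have F2_e: "(\<lambda>t. w t * (F2 t (y t) (c t) * e t)) integrable_on {a..b}"
    unfolding w_def c_def using ab alpha
    by (intro powr_kernel_mult_integrable continuous_intros along_y_continuous_on F2_cont e_cont) auto
  have F3_d: "(\<lambda>t. w t * (F3 t (y t) (c t) * caputo a b beta e t)) integrable_on {a..b}"
    unfolding w_def c_def using ab alpha
    by (intro powr_kernel_mult_integrable continuous_intros along_y_continuous_on F3_cont
        caputo_continuous_on[OF ab beta e' e'_cont]) auto
  \<comment> \<open>Fubini moves the Caputo derivative of the variation onto \<open>weighted_F3\<close> as a right fractional integral\<close>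
  have swap: "integral {a..b} (\<lambda>t. w t * (F3 t (y t) (c t) * caputo a b beta e t))
      = integral {a..b} (\<lambda>t. I t * e' t)"
  proof -
    have "integral {a..b} (\<lambda>t. w t * (F3 t (y t) (c t) * caputo a b beta e t))
        = integral {a..b} (\<lambda>t. 1 / Gamma (1 - beta) *
            (weighted_F3 t * integral {a..t} (\<lambda>\<tau>. (t - \<tau>) powr (- beta) * e' \<tau>)))"
      using caputo_eq_powr_kernel_integral[OF ab _ e']
      by (intro Henstock_Kurzweil_Integration.integral_cong) (simp add: w_def c_def)
    also have "\<dots> = 1 / Gamma (1 - beta) *
        integral {a..b} (\<lambda>\<tau>. e' \<tau> * integral {\<tau>..b} (\<lambda>t. (t - \<tau>) powr (- beta) * weighted_F3 t))"
      by (simp add: powr_kernel_integral_swap[OF beta weighted_F3_set_integrable e'_cont])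
    also have "\<dots> = integral {a..b} (\<lambda>t. I t * e' t)"
      by (simp add: I_def rRLI_def mult_ac)
    finally show ?thesis .
  qed
  have by_parts: "integral {a..b} (\<lambda>t. I t * e' t) = - I a * e a - integral {a..b} (\<lambda>t. deriv I t * e t)"
    and dI_e: "(\<lambda>t. deriv I t * e t) integrable_on {a..b}"
    using integration_by_parts_vanishing_right[OF ab I_cont[folded I_def] I_diff[folded I_def] e' e'_cont e_b]
    by auto
  have "integral {a..b} (\<lambda>t. w t * (F2 t (y t) (c t) * e t))
      + integral {a..b} (\<lambda>t. w t * (F3 t (y t) (c t) * caputo a b beta e t)) = 0"
    using first_variation_vanishes[OF e' e'_cont e_b] integral_add[OF F2_e F3_d]
    by (simp add: w_def c_def distrib_left)
  moreover have "euler_lagrange_lhs t * e t = w t * (F2 t (y t) (c t) * e t) - deriv I t * e t" for t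
    by (simp add: w_def c_def I_def rRLD_def algebra_simps)
  ultimately show ?thesis
    using swap by_parts integral_diff[OF F2_e dI_e] by (simp add: I_def)
qed

lemma euler_lagrange_equation:
  assumes I_cont: "continuous_on {a..b} (rRLI b (1 - beta) weighted_F3)"
    and I_diff: "\<And>t. t \<in> {a<..<b} \<Longrightarrow> rRLI b (1 - beta) weighted_F3 differentiable (at t)"
    and lhs_cont: "continuous_on {a<..<b} euler_lagrange_lhs"
    and t: "t \<in> {a<..<b}"
  shows "euler_lagrange_lhs t = 0"
proof (rule fundamental_lemma_calculus_of_variations[OF lhs_cont _ t])
  fix e e' :: "real \<Rightarrow> real"
  assume "\<And>t. (e has_real_derivative e' t) (at t)" "continuous_on UNIV e'" "e a = 0" "e b = 0"
  then show "integral {a..b} (\<lambda>t. euler_lagrange_lhs t * e t) = 0"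
    using integral_euler_lagrange_lhs_mult_variation[OF I_cont I_diff, of e e']
    by (auto intro: has_field_derivative_at_within continuous_on_subset)
qed

lemma natural_boundary_condition:
  assumes I_cont: "continuous_on {a..b} (rRLI b (1 - beta) weighted_F3)"
    and I_diff: "\<And>t. t \<in> {a<..<b} \<Longrightarrow> rRLI b (1 - beta) weighted_F3 differentiable (at t)"
    and lhs_cont: "continuous_on {a<..<b} euler_lagrange_lhs"
  shows "rRLI b (1 - beta) weighted_F3 a = 0"
proof -
  \<comment> \<open>test with the variation \<open>e t = b - t\<close>, which vanishes only at the fixed endpoint\<close>
  have "integral {a..b} (\<lambda>t. euler_lagrange_lhs t * (b - t)) = rRLI b (1 - beta) weighted_F3 a * (b - a)"
    by (rule integral_euler_lagrange_lhs_mult_variation[OF I_cont I_diff, where e' = "\<lambda>_. -1"])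
       (auto intro!: derivative_eq_intros)
  moreover have "integral {a..b} (\<lambda>t. euler_lagrange_lhs t * (b - t)) = integral {a..b} (\<lambda>t. 0)"
    using euler_lagrange_equation[OF I_cont I_diff lhs_cont]
    by (intro integral_spike[of "{a, b}"]) auto
  ultimately show ?thesis
    using ab by simp
qed

end

theorem mainTheorem10:
  fixes a b alpha beta yb :: real
    and F F1 F2 F3 :: "real \<Rightarrow> real \<Rightarrow> real \<Rightarrow> real"
    and y :: "real \<Rightarrow> real"
  assumes ab: "a < b"
    and alpha: "0 < alpha" "alpha < 1"
    and beta: "0 < beta" "beta < 1"
    and F_deriv: "\<And>t u v. t \<in> {a..b} \<Longrightarrow>
        ((\<lambda>(t, u, v). F t u v) has_derivative
           (\<lambda>(dt, du, dv). F1 t u v * dt + F2 t u v * du + F3 t u v * dv))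
        (at (t, u, v) within {a..b} \<times> UNIV)"
    and F_C1: "continuous_on ({a..b} \<times> UNIV) (\<lambda>(t, u, v). F1 t u v)"
              "continuous_on ({a..b} \<times> UNIV) (\<lambda>(t, u, v). F2 t u v)"
              "continuous_on ({a..b} \<times> UNIV) (\<lambda>(t, u, v). F3 t u v)"
    and y_adm: "admissible a b beta yb y"
    and y_min: "\<And>z. admissible a b beta yb z \<Longrightarrow> Jfun a b alpha beta F y \<le> Jfun a b alpha beta F z"
    and cont2: "continuous_on {a<..<b}
        (\<lambda>t. (b - t) powr (alpha - 1) * F2 t (y t) (caputo a b beta y t))"
    and D_exists: "\<And>t. t \<in> {a<..<b} \<Longrightarrow>
        rRLI b (1 - beta) (\<lambda>\<tau>. (b - \<tau>) powr (alpha - 1) * F3 \<tau> (y \<tau>) (caputo a b beta y \<tau>))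
          differentiable (at t)"
    and D_cont: "continuous_on {a<..<b}
        (rRLD b beta (\<lambda>\<tau>. (b - \<tau>) powr (alpha - 1) * F3 \<tau> (y \<tau>) (caputo a b beta y \<tau>)))"
    and I_ac: "abs_continuous_on a b
        (rRLI b (1 - beta) (\<lambda>\<tau>. (b - \<tau>) powr (alpha - 1) * F3 \<tau> (y \<tau>) (caputo a b beta y \<tau>)))"
    and alt: "(integrable (lebesgue_on {p :: real \<times> real. a \<le> snd p \<and> snd p < fst p \<and> fst p \<le> b})
                 (\<lambda>(t, \<tau>). ((t - \<tau>) powr (- beta) / Gamma (1 - beta))\<^sup>2)
             \<and> (\<lambda>\<tau>. (b - \<tau>) powr (alpha - 1) * F3 \<tau> (y \<tau>) (caputo a b beta y \<tau>))
                 \<in> borel_measurable (lebesgue_on {a..b})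
             \<and> integrable (lebesgue_on {a..b})
                 (\<lambda>\<tau>. ((b - \<tau>) powr (alpha - 1) * F3 \<tau> (y \<tau>) (caputo a b beta y \<tau>))\<^sup>2))
           \<or> (\<exists>G. continuous_on {a..b} G \<and>
                 (\<forall>\<tau>\<in>{a..<b}. G \<tau> = (b - \<tau>) powr (alpha - 1) * F3 \<tau> (y \<tau>) (caputo a b beta y \<tau>)))"
  shows "(\<forall>t\<in>{a<..<b}.
            (b - t) powr (alpha - 1) * F2 t (y t) (caputo a b beta y t)
            + rRLD b beta (\<lambda>\<tau>. (b - \<tau>) powr (alpha - 1) * F3 \<tau> (y \<tau>) (caputo a b beta y \<tau>)) t = 0)
         \<and> rRLI b (1 - beta) (\<lambda>\<tau>. (b - \<tau>) powr (alpha - 1) * F3 \<tau> (y \<tau>) (caputo a b beta y \<tau>)) a = 0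
         \<and> integral {a..b} (\<lambda>\<tau>. (\<tau> - a) powr (- beta) * ((b - \<tau>) powr (alpha - 1) * F3 \<tau> (y \<tau>) (caputo a b beta y \<tau>))) = 0"
proof -
  interpret fractional_variational_problem a b alpha beta yb F F1 F2 F3 y
    using ab alpha(1) beta F_deriv F_C1(2,3) y_adm y_min by unfold_locales
  note I_cont = abs_continuous_on_imp_continuous_on[OF I_ac]
  have lhs_cont: "continuous_on {a<..<b} euler_lagrange_lhs"
    using cont2 D_cont by (intro continuous_on_add)
  have boundary: "rRLI b (1 - beta) weighted_F3 a = 0"
    by (rule natural_boundary_condition[OF I_cont D_exists lhs_cont])
  have "Gamma (1 - beta) > 0"
    using beta(2) by (intro Gamma_real_pos) simp
  with boundary have "integral {a..b} (\<lambda>\<tau>. (\<tau> - a) powr (- beta) * weighted_F3 \<tau>) = 0"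
    by (simp add: rRLI_def)
  then show ?thesis
    using euler_lagrange_equation[OF I_cont D_exists lhs_cont] boundary by blast
qed

end
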